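(* The action institution enjoys the satisfaction condition. That is, for every action signature morphism $\eta : H \to H'$, every $H'$-action structure $\Omega'$ and every action sentence $g_{\mathrm{pre}} \rightarrow [a]\overline{m} \rhd g_{\mathrm{post}}$ over $H$, $$\Omega'|_\eta \models g_{\mathrm{pre}} \rightarrow [a]\overline{m} \rhd g_{\mathrm{post}} \iff \Omega' \models \eta(g_{\mathrm{pre}} \rightarrow [a]\overline{m} \rhd g_{\mathrm{post}}).$$
   Context: Guards. Fix a set $\mathrm{Val}$ of values and an institution of guards: its signatures are sets $V$ (of variables) and its signature morphisms are functions $v : V \to V'$; the models of $V$ are the valuations $\omega : V \to \mathrm{Val}$, and the reduct of $\omega' : V' \to \mathrm{Val}$ along $v$ is $\omega' \circ v$. For each $V$ there is a set $G(V)$ of guards, for each $v$ a translation map $G(v) : G(V) \to G(V')$, and a satisfaction relation $\omega \models g$ between valuations and guards, such that $\omega' \models G(v)(g)$ iff $\omega' \circ v \models g$. Actions. An action signature is a triple $H = (A_H, M_H, V_H)$ of sets (actions, messages, variables); a morphism $\eta : H \to H'$ is a triple of functions $\eta = (\eta_A : A_H \to A_{H'}, \eta_M : M_H \to M_{H'}, \eta_V : V_H \to V_{H'})$. An $H$-action structure is a relation $\Omega \subseteq (V_H \to \mathrm{Val}) \times (A_H \times \wp(M_H)) \times (V_H \to \mathrm{Val})$; we write $\omega \xrightarrow{a,\overline{m}}_\Omega \omega'$ for $(\omega,a,\overline{m},\omega') \in \Omega$. The reduct of an $H'$-action structure $\Omega'$ along $\eta$ is $\Omega'|_\eta = \{ (\omega_1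 \circ \eta_V, a, \eta_M^{-1}(\overline{m}), \omega_2 \circ \eta_V) \mid (\omega_1, \eta_A(a), \overline{m}, \omega_2) \in \Omega' \}$. The $H$-sentences are expressions $g_{\mathrm{pre}} \rightarrow [a]\overline{m} \rhd g_{\mathrm{post}}$ with $g_{\mathrm{pre}}, g_{\mathrm{post}} \in G(V_H)$, $a \in A_H$, $\overline{m} \subseteq M_H$; their translation along $\eta$ is $G(\eta_V)(g_{\mathrm{pre}}) \rightarrow [\eta_A(a)]\eta_M(\overline{m}) \rhd G(\eta_V)(g_{\mathrm{post}})$ (where $\eta_M(\overline{m})$ is the image). Satisfaction: $\Omega \models g_{\mathrm{pre}} \rightarrow [a]\overline{m} \rhd g_{\mathrm{post}}$ iff for all $\omega, \omega' : V_H \to \mathrm{Val}$ and all $\overline{m}' \subseteq M_H$, if $\omega \models g_{\mathrm{pre}}$ and $\omega \xrightarrow{a,\overline{m}'}_\Omega \omega'$, then $\omega' \models g_{\mathrm{post}}$ and $\overline{m} \subseteq \overline{m}'$. *)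

theory Defs
  imports Main
begin

(* Action signature H = (A_H, M_H, V_H) is rendered by the three types 'a, 'm, 'v;
   a signature morphism eta = (etaA, etaM, etaV) by three functions.
   The guard sets G(V_H), G(V_H') are types 'g, 'g2; the guard translation
   G(etaV) is a function trG :: 'g => 'g2; guard satisfaction relations are
   satG :: ('v => 'val) => 'g => bool and satG' :: ('v2 => 'val) => 'g2 => bool. *)

type_synonym ('v, 'val, 'a, 'm) action_structure =
  "(('v \<Rightarrow> 'val) \<times> ('a \<times> 'm set) \<times> ('v \<Rightarrow> 'val)) set"

datatype ('g, 'a, 'm) action_sentence = ActSen 'g 'a "'m set" 'g

definition action_reduct ::
  "('a \<Rightarrow> 'a2) \<Rightarrow> ('m \<Rightarrow> 'm2) \<Rightarrow> ('v \<Rightarrow> 'v2)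
   \<Rightarrow> ('v2, 'val, 'a2, 'm2) action_structure \<Rightarrow> ('v, 'val, 'a, 'm) action_structure" where
  "action_reduct etaA etaM etaV \<Omega>' =
     {(\<omega>1 \<circ> etaV, (a, etaM -` ms), \<omega>2 \<circ> etaV) | \<omega>1 a ms \<omega>2.
        (\<omega>1, (etaA a, ms), \<omega>2) \<in> \<Omega>'}"

definition sentence_translate ::
  "('g \<Rightarrow> 'g2) \<Rightarrow> ('a \<Rightarrow> 'a2) \<Rightarrow> ('m \<Rightarrow> 'm2)
   \<Rightarrow> ('g, 'a, 'm) action_sentence \<Rightarrow> ('g2, 'a2, 'm2) action_sentence" where
  "sentence_translate trG etaA etaM s =
     (case s of ActSen gpre a ms gpost \<Rightarrow> ActSen (trG gpre) (etaA a) (etaM ` ms) (trG gpost))"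

definition action_sat ::
  "(('v \<Rightarrow> 'val) \<Rightarrow> 'g \<Rightarrow> bool) \<Rightarrow> ('v, 'val, 'a, 'm) action_structure
   \<Rightarrow> ('g, 'a, 'm) action_sentence \<Rightarrow> bool" where
  "action_sat satG \<Omega> s =
     (case s of ActSen gpre a ms gpost \<Rightarrow>
        (\<forall>\<omega> \<omega>' ms'. satG \<omega> gpre \<and> (\<omega>, (a, ms'), \<omega>') \<in> \<Omega>
            \<longrightarrow> satG \<omega>' gpost \<and> ms \<subseteq> ms'))"

end

theory Submission
  imports Defs
begin

text \<open>Every transition of the reduct comes from a transition of \<open>\<Omega>'\<close> along \<open>etaA a\<close>, and
  \<open>ms \<subseteq> etaM -` ms'\<close> is the same as \<open>etaM ` ms \<subseteq> ms'\<close>; so satisfaction in the reduct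
  is a statement about \<open>\<Omega>'\<close> alone, and the guard satisfaction condition turns it into
  satisfaction of the translated sentence.\<close>

lemma action_reduct_iff:
  "(\<omega>, (a, ms), \<omega>') \<in> action_reduct etaA etaM etaV \<Omega>' \<longleftrightarrow>
     (\<exists>\<omega>1 ms' \<omega>2. \<omega> = \<omega>1 \<circ> etaV \<and> ms = etaM -` ms' \<and> \<omega>' = \<omega>2 \<circ> etaV
        \<and> (\<omega>1, (etaA a, ms'), \<omega>2) \<in> \<Omega>')"
  unfolding action_reduct_def by blast

lemma action_sat_reduct_iff:
  "action_sat satG (action_reduct etaA etaM etaV \<Omega>') (ActSen gpre a ms gpost) \<longleftrightarrow>
     (\<forall>\<omega>1 \<omega>2 ms'. satG (\<omega>1 \<circ> etaV) gpre \<and> (\<omega>1, (etaA a, ms'), \<omega>2) \<in> \<Omega>'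
        \<longrightarrow> satG (\<omega>2 \<circ> etaV) gpost \<and> etaM ` ms \<subseteq> ms')"
  by (simp add: action_sat_def action_reduct_iff image_subset_iff_subset_vimage) blast

theorem mainTheorem1:
  fixes etaA :: "'a \<Rightarrow> 'a2" and etaM :: "'m \<Rightarrow> 'm2" and etaV :: "'v \<Rightarrow> 'v2"
    and trG :: "'g \<Rightarrow> 'g2"
    and satG :: "('v \<Rightarrow> 'val) \<Rightarrow> 'g \<Rightarrow> bool"
    and satG' :: "('v2 \<Rightarrow> 'val) \<Rightarrow> 'g2 \<Rightarrow> bool"
    and \<Omega>' :: "('v2, 'val, 'a2, 'm2) action_structure"
    and s :: "('g, 'a, 'm) action_sentence"
  assumes guard_sat_cond: "\<And>\<omega>' g. satG' \<omega>' (trG g) \<longleftrightarrow> satG (\<omega>' \<circ> etaV) g"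
  shows "action_sat satG (action_reduct etaA etaM etaV \<Omega>') s
     \<longleftrightarrow> action_sat satG' \<Omega>' (sentence_translate trG etaA etaM s)"
proof (cases s)
  case (ActSen gpre a ms gpost)
  then show ?thesis
    unfolding ActSen action_sat_reduct_iff
    by (simp add: action_sat_def sentence_translate_def guard_sat_cond)
qed

end
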